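(* Let $k\in\mathbb{N}$. There exists an almost law $(w_n)_n$ for $\mathrm{SU}(k)$ and a constant $C>0$ such that $$L_k(w_n)\le\exp\left(-C\cdot\ell(w_n)^{\log_2(\varphi)}\right)\quad\text{for all } n,$$ where $\varphi$ is the golden ratio.
   Context: $\mathbb{F}_2$ is the free group on two generators, $\ell$ the word length with respect to the free generators and their inverses. For $w\in\mathbb{F}_2$, the word map $w\colon\mathrm{SU}(k)\times\mathrm{SU}(k)\to\mathrm{SU}(k)$ is given by evaluation. On $\mathrm{SU}(k)$ use the metric $d(u,v)=\|u-v\|$ with $\|\cdot\|$ the operator norm, and set $L_k(w):=\max\{d(1_k,w(u,v))\mid u,v\in\mathrm{SU}(k)\}$. An almost law for $\mathrm{SU}(k)$ is a sequence $(w_n)$ of non-trivial elements of $\mathbb{F}_2$ such that for every neighbourhood $U$ of the identity in $\mathrm{SU}(k)$ there is $N$ with $w_n(\mathrm{SU}(k)\times\mathrm{SU}(k))\subset U$ for all $n\ge N$. *)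

theory Defs
  imports "HOL-Analysis.Analysis"
begin

text \<open>Elements of the free group F_2 on generators a, b are represented by their
  unique reduced words.  A letter is a pair (g, e): g = False means a, g = True means b;
  e = True means the inverse of that generator.\<close>

type_synonym letter = "bool \<times> bool"

definition inverse_letters :: "letter \<Rightarrow> letter \<Rightarrow> bool" where
  "inverse_letters x y \<longleftrightarrow> fst x = fst y \<and> snd x \<noteq> snd y"

definition reduced_word :: "letter list \<Rightarrow> bool" where
  "reduced_word w \<longleftrightarrow> (\<forall>i. Suc i < length w \<longrightarrow> \<not> inverse_letters (w ! i) (w ! Suc i))"

definition word_length :: "letter list \<Rightarrow> nat" where
  "word_length w = length w"

text \<open>Conjugate transpose, SU(k) as a set of k x k complex matrices (k = CARD('n)).\<close>
definition adjoint_mat :: "complex^'n^'n \<Rightarrow> complex^'n^'n" where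
  "adjoint_mat A = (\<chi> i j. cnj (A $ j $ i))"

definition SU :: "'n::finite itself \<Rightarrow> (complex^'n^'n) set" where
  "SU _ = {A. A ** adjoint_mat A = mat 1 \<and> adjoint_mat A ** A = mat 1 \<and> det A = 1}"

definition op_norm :: "complex^'n^'n \<Rightarrow> real" where
  "op_norm A = onorm (\<lambda>x. A *v x)"

definition dSU :: "complex^'n^'n \<Rightarrow> complex^'n^'n \<Rightarrow> real" where
  "dSU A B = op_norm (A - B)"

definition eval_letter :: "complex^'n^'n \<Rightarrow> complex^'n^'n \<Rightarrow> letter \<Rightarrow> complex^'n^'n" where
  "eval_letter u v l = (let g = (if fst l then v else u) in if snd l then matrix_inv g else g)"

definition word_map :: "letter list \<Rightarrow> complex^'n^'n \<Rightarrow> complex^'n^'n \<Rightarrow> complex^'n^'n" where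
  "word_map w u v = foldr (\<lambda>l acc. eval_letter u v l ** acc) w (mat 1)"

definition L_SU :: "'n::finite itself \<Rightarrow> letter list \<Rightarrow> real" where
  "L_SU T w = (SUP p \<in> SU T \<times> SU T. dSU (mat 1) (word_map w (fst p) (snd p)))"

definition almost_law :: "'n::finite itself \<Rightarrow> (nat \<Rightarrow> letter list) \<Rightarrow> bool" where
  "almost_law T ws \<longleftrightarrow>
     (\<forall>n. reduced_word (ws n) \<and> ws n \<noteq> []) \<and>
     (\<forall>\<epsilon>>0. \<exists>N. \<forall>n\<ge>N. \<forall>u\<in>SU T. \<forall>v\<in>SU T. dSU (mat 1) (word_map (ws n) u v) < \<epsilon>)"

definition golden_ratio :: real where
  "golden_ratio = (1 + sqrt 5) / 2"

end

theory Submission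
  imports Defs
begin

text \<open>For unitary \<open>X\<close>, \<open>Y\<close> one has \<open>\<parallel>1 - [X, Y]\<parallel> \<le> 2 \<parallel>1 - X\<parallel> \<parallel>1 - Y\<parallel>\<close>.
  Starting from \<open>X\<^sub>0 = a\<^sup>m\<close>, \<open>Y\<^sub>0 = b\<^sup>m\<^sup>'\<close> and iterating
  \<open>(X, Y) \<mapsto> (X Y, X\<^sup>-\<^sup>1 Y\<^sup>-\<^sup>1)\<close>, the words \<open>Z\<^sub>n = X\<^sub>n Y\<^sub>n\<close> satisfy
  \<open>Z\<^sub>n\<^sub>+\<^sub>1 = [X\<^sub>n, Y\<^sub>n]\<close> and \<open>X\<^sub>n = Z\<^sub>n\<^sub>-\<^sub>1\<close>, so their distances \<open>\<delta>\<^sub>n\<close> to the identity obey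
  \<open>\<delta>\<^sub>n\<^sub>+\<^sub>1 \<le> 2 \<delta>\<^sub>n \<delta>\<^sub>n\<^sub>-\<^sub>1\<close> while the length only doubles. Once \<open>\<delta>\<^sub>0\<close>, \<open>\<delta>\<^sub>1\<close> are small,
  \<open>\<delta>\<^sub>n\<close> decays like \<open>2\<^sup>-\<^sup>\<phi>\<^sup>n\<close>, which is \<open>exp (-c \<ell> powr log 2 \<phi>)\<close> in terms of the length \<open>\<ell>\<close>.

  By compactness there is an \<open>M\<close> such that every unitary \<open>u\<close> has a power \<open>u\<^sup>m\<close> with
  \<open>1 \<le> m \<le> M\<close> close to the identity. A commutator is within a factor 4 as close to the identity
  as either of its entries, so nesting commutators with the words \<open>Z\<^sub>n\<close> for all pairs
  \<open>(m, m')\<close> with \<open>m, m' \<le> M\<close> yields a single word that is small on all of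
  \<open>SU(k) \<times> SU(k)\<close>.\<close>

section \<open>Operator norm and unitary matrices\<close>

lemma op_norm_nonneg: "op_norm A \<ge> 0"
  unfolding op_norm_def by (rule onorm_pos_le) simp

lemma op_norm_mult_le: "op_norm (A ** B) \<le> op_norm A * op_norm B"
proof -
  have "(*v) (A ** B) = (*v) A \<circ> (*v) B"
    by (auto simp: matrix_vector_mul_assoc)
  then show ?thesis
    unfolding op_norm_def by (simp add: onorm_compose)
qed

lemma op_norm_mult_contraction_le:
  assumes "op_norm A \<le> 1"
  shows "op_norm (A ** B) \<le> op_norm B" and "op_norm (B ** A) \<le> op_norm B"
  using op_norm_mult_le[of A B] op_norm_mult_le[of B A]
    mult_left_le_one_le[OF op_norm_nonneg op_norm_nonneg assms, of B]
    mult_right_le_one_le[OF op_norm_nonneg op_norm_nonneg assms, of B]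
  by linarith+

lemma op_norm_add_le: "op_norm (A + B) \<le> op_norm A + op_norm B"
proof -
  have "(*v) (A + B) = (\<lambda>x. A *v x + B *v x)"
    by (auto simp: matrix_vector_mult_add_rdistrib)
  then show ?thesis
    unfolding op_norm_def by (simp add: onorm_triangle)
qed

lemma op_norm_uminus: "op_norm (- A) = op_norm A"
proof -
  have "(*v) (- A) = (\<lambda>x. - (A *v x))"
    by (auto simp: vec_eq_iff matrix_vector_mult_def sum_negf)
  then show ?thesis
    unfolding op_norm_def by (simp add: onorm_neg)
qed

lemma op_norm_diff_commute: "op_norm (A - B) = op_norm (B - A)"
  using op_norm_uminus[of "A - B"] by simp

lemma op_norm_diff_le: "op_norm (A - B) \<le> op_norm A + op_norm B"
  using op_norm_add_le[of A "- B"] by (simp add: op_norm_uminus)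

lemma op_norm_mat_1_le: "op_norm (mat 1 :: complex^'n^'n) \<le> 1"
proof -
  have "(*v) (mat 1 :: complex^'n^'n) = (\<lambda>x. x)" by (rule ext) simp
  then show ?thesis unfolding op_norm_def by (simp add: onorm_id_le)
qed

lemma norm_le_sum_abs_components: "norm (x :: complex^'n) \<le> (\<Sum>i\<in>UNIV. norm (x $ i))"
  unfolding norm_vec_def by (rule L2_set_le_sum) simp

lemma op_norm_le_norm: "op_norm (A :: complex^'n^'n) \<le> real CARD('n)^2 * norm A"
  unfolding op_norm_def
proof (rule onorm_le)
  fix x :: "complex^'n"
  have row: "norm ((A *v x) $ i) \<le> real CARD('n) * (norm A * norm x)" for i
  proof -
    have "norm ((A *v x) $ i) \<le> (\<Sum>j\<in>UNIV. norm (A $ i $ j * x $ j))"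
      unfolding matrix_vector_mult_def by (simp add: norm_sum)
    also have "\<dots> \<le> (\<Sum>(j::'n)\<in>UNIV. norm A * norm x)"
    proof (rule sum_mono)
      fix j
      have "norm (A $ i $ j) \<le> norm A"
        using Finite_Cartesian_Product.norm_nth_le[of "A $ i" j]
          Finite_Cartesian_Product.norm_nth_le[of A i] by linarith
      then show "norm (A $ i $ j * x $ j) \<le> norm A * norm x"
        by (simp add: norm_mult mult_mono Finite_Cartesian_Product.norm_nth_le)
    qed
    finally show ?thesis by simp
  qed
  have "norm (A *v x) \<le> (\<Sum>i\<in>UNIV. norm ((A *v x) $ i))"
    by (rule norm_le_sum_abs_components)
  also have "\<dots> \<le> (\<Sum>(i::'n)\<in>UNIV. real CARD('n) * (norm A * norm x))"
    by (rule sum_mono) (rule row)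
  finally show "norm (A *v x) \<le> real CARD('n)^2 * norm A * norm x"
    by (simp add: power2_eq_square mult_ac)
qed

lemma matrix_diff_ldistrib: "(A :: 'a::ring_1^'n^'m) ** (B - C) = A ** B - A ** C"
  by (simp add: vec_eq_iff matrix_matrix_mult_def sum_subtractf algebra_simps)

lemma matrix_diff_rdistrib: "((A :: 'a::ring_1^'n^'m) - B) ** C = A ** C - B ** C"
  by (simp add: vec_eq_iff matrix_matrix_mult_def sum_subtractf algebra_simps)

lemma adjoint_mat_adjoint_mat [simp]: "adjoint_mat (adjoint_mat A) = A"
  by (simp add: adjoint_mat_def vec_eq_iff)

lemma adjoint_mat_mult: "adjoint_mat (A ** B) = adjoint_mat B ** adjoint_mat A"
  by (simp add: adjoint_mat_def vec_eq_iff matrix_matrix_mult_def mult.commute)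

lemma adjoint_mat_1 [simp]: "adjoint_mat (mat 1) = mat 1"
  by (simp add: adjoint_mat_def vec_eq_iff mat_def)

definition unitary_mat :: "complex^'n^'n \<Rightarrow> bool" where
  "unitary_mat A \<longleftrightarrow> A ** adjoint_mat A = mat 1 \<and> adjoint_mat A ** A = mat 1"

lemma unitary_mat_1 [simp]: "unitary_mat (mat 1)"
  by (simp add: unitary_mat_def)

lemma unitary_mat_adjoint: "unitary_mat A \<Longrightarrow> unitary_mat (adjoint_mat A)"
  by (auto simp: unitary_mat_def)

lemma unitary_mat_mult:
  assumes "unitary_mat A" "unitary_mat B"
  shows "unitary_mat (A ** B)"
proof -
  have "A ** B ** adjoint_mat (A ** B) = A ** (B ** adjoint_mat B) ** adjoint_mat A"
    "adjoint_mat (A ** B) ** (A ** B) = adjoint_mat B ** (adjoint_mat A ** A) ** B"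
    by (simp_all add: adjoint_mat_mult matrix_mul_assoc)
  then show ?thesis using assms by (simp add: unitary_mat_def)
qed

lemma SU_unitary_mat: "A \<in> SU T \<Longrightarrow> unitary_mat A"
  by (simp add: SU_def unitary_mat_def)

lemma mat_1_SU: "mat 1 \<in> SU T"
  by (simp add: SU_def)

lemma matrix_inv_unitary_mat:
  assumes "unitary_mat A"
  shows "matrix_inv A = adjoint_mat A"
proof -
  have "\<exists>A'. A ** A' = mat 1 \<and> A' ** A = mat 1"
    using assms unfolding unitary_mat_def by blast
  then have inv: "A ** matrix_inv A = mat 1"
    unfolding matrix_inv_def by (rule someI_ex[THEN conjunct1])
  have "matrix_inv A = adjoint_mat A ** A ** matrix_inv A"
    using assms by (simp add: unitary_mat_def)
  also have "\<dots> = adjoint_mat A"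
    by (simp add: inv flip: matrix_mul_assoc)
  finally show ?thesis .
qed

lemma complex_norm_vec_square: "complex_of_real (norm (x :: complex^'n)^2) = (\<Sum>i\<in>UNIV. x $ i * cnj (x $ i))"
proof -
  have "norm x ^ 2 = (\<Sum>i\<in>UNIV. cmod (x $ i)^2)"
    unfolding norm_vec_def L2_set_def by (simp add: sum_nonneg)
  then show ?thesis by (simp flip: complex_norm_square)
qed

lemma norm_unitary_mat_mult_vector:
  assumes "adjoint_mat U ** U = mat 1"
  shows "norm (U *v x) = norm x"
proof -
  have orth: "(\<Sum>i\<in>UNIV. cnj (U $ i $ l) * U $ i $ j) = (if l = j then 1 else 0)" for l j
    using assms by (auto simp: vec_eq_iff matrix_matrix_mult_def adjoint_mat_def mat_def)
  have "(\<Sum>i\<in>UNIV. (U *v x) $ i * cnj ((U *v x) $ i))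
      = (\<Sum>i\<in>UNIV. \<Sum>j\<in>UNIV. \<Sum>l\<in>UNIV. (x $ j * cnj (x $ l)) * (cnj (U $ i $ l) * U $ i $ j))"
    by (simp add: matrix_vector_mult_def sum_product mult_ac)
  also have "\<dots> = (\<Sum>j\<in>UNIV. \<Sum>l\<in>UNIV. (x $ j * cnj (x $ l)) * (\<Sum>i\<in>UNIV. cnj (U $ i $ l) * U $ i $ j))"
    by (simp add: sum_distrib_left, subst sum.swap, rule sum.cong[OF refl], rule sum.swap)
  also have "\<dots> = (\<Sum>j\<in>UNIV. x $ j * cnj (x $ j))"
    by (simp add: orth if_distrib cong: if_cong)
  finally have "complex_of_real (norm (U *v x)^2) = complex_of_real (norm x^2)"
    by (simp only: complex_norm_vec_square)
  then have "norm (U *v x)^2 = norm x^2"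
    using of_real_eq_iff by blast
  then show ?thesis by simp
qed

lemma op_norm_unitary_mat_le: "unitary_mat U \<Longrightarrow> op_norm U \<le> 1"
  unfolding op_norm_def unitary_mat_def
  by (rule onorm_le) (simp add: norm_unitary_mat_mult_vector)

lemma norm_unitary_mat_le: 
  assumes "unitary_mat (A :: complex^'n^'n)"
  shows "norm A \<le> real CARD('n)"
proof -
  have "norm (A $ i)^2 = 1" for i
  proof -
    have "complex_of_real (norm (A $ i)^2) = (\<Sum>j\<in>UNIV. A $ i $ j * cnj (A $ i $ j))"
      by (rule complex_norm_vec_square)
    also have "\<dots> = (A ** adjoint_mat A) $ i $ i"
      by (simp add: matrix_matrix_mult_def adjoint_mat_def)
    also have "\<dots> = 1" using assms by (simp add: unitary_mat_def mat_def)
    finally show ?thesis using of_real_eq_1_iff by blast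
  qed
  then have "norm A^2 = real CARD('n)"
    unfolding norm_vec_def L2_set_def by (simp add: sum_nonneg)
  also have "\<dots> \<le> real CARD('n)^2"
    by (simp add: power2_eq_square)
  finally show ?thesis by (rule power2_le_imp_le) simp
qed

abbreviation dist_one :: "complex^'n^'n \<Rightarrow> real" where
  "dist_one A \<equiv> dSU (mat 1) A"

lemma dist_one_nonneg: "dist_one A \<ge> 0"
  by (simp add: dSU_def op_norm_nonneg)

lemma dist_one_unitary_le_2:
  assumes "unitary_mat (A :: complex^'n^'n)"
  shows "dist_one A \<le> 2"
  using op_norm_diff_le[of "mat 1" A] op_norm_mat_1_le[where 'n='n] op_norm_unitary_mat_le[OF assms]
  unfolding dSU_def by linarith

lemma dist_one_adjoint_le:
  assumes "unitary_mat X"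
  shows "dist_one (adjoint_mat X) \<le> dist_one X"
proof -
  have "mat 1 - adjoint_mat X = adjoint_mat X ** (X - mat 1)"
    using assms by (simp add: matrix_diff_ldistrib unitary_mat_def)
  then show ?thesis
    using op_norm_mult_contraction_le(1)[OF op_norm_unitary_mat_le[OF unitary_mat_adjoint[OF assms]]]
    by (simp add: dSU_def op_norm_diff_commute)
qed

lemma dist_one_mult_le:
  assumes "unitary_mat X"
  shows "dist_one (X ** Y) \<le> dist_one X + dist_one Y"
proof -
  have "mat 1 - X ** Y = (mat 1 - X) + X ** (mat 1 - Y)"
    by (simp add: matrix_diff_ldistrib)
  then have "op_norm (mat 1 - X ** Y) \<le> op_norm (mat 1 - X) + op_norm (X ** (mat 1 - Y))"
    by (simp only: op_norm_add_le)
  then show ?thesis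
    using op_norm_mult_contraction_le(1)[OF op_norm_unitary_mat_le[OF assms], of "mat 1 - Y"]
    by (simp add: dSU_def)
qed

text \<open>For unitary matrices the adjoint is the inverse, so this is the group commutator.\<close>
definition mat_commutator :: "complex^'n^'n \<Rightarrow> complex^'n^'n \<Rightarrow> complex^'n^'n" where
  "mat_commutator X Y = X ** Y ** adjoint_mat X ** adjoint_mat Y"

text \<open>With \<open>P = 1 - X\<close> and \<open>Q = 1 - Y\<close> one has \<open>1 - [X, Y] = (QP - PQ) X\<^sup>* Y\<^sup>*\<close>,
  which is quadratic in the distances to the identity.\<close>
lemma dist_one_commutator_le:
  assumes X: "unitary_mat X" and Y: "unitary_mat Y"
  shows "dist_one (mat_commutator X Y) \<le> 2 * dist_one X * dist_one Y"
proof -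
  define P where "P = mat 1 - X"
  define Q where "Q = mat 1 - Y"
  have "Y ** X ** adjoint_mat X ** adjoint_mat Y = Y ** (X ** adjoint_mat X) ** adjoint_mat Y"
    by (simp add: matrix_mul_assoc)
  then have YX: "Y ** X ** adjoint_mat X ** adjoint_mat Y = mat 1"
    using X Y by (simp add: unitary_mat_def)
  have "Y ** X - X ** Y = Q ** P - P ** Q"
    by (simp add: P_def Q_def matrix_diff_ldistrib matrix_diff_rdistrib)
  moreover have "mat 1 - mat_commutator X Y = (Y ** X - X ** Y) ** (adjoint_mat X ** adjoint_mat Y)"
    by (simp add: mat_commutator_def matrix_diff_rdistrib YX matrix_mul_assoc)
  ultimately have "op_norm (mat 1 - mat_commutator X Y) \<le> op_norm (Q ** P - P ** Q)"
    using op_norm_mult_contraction_le(2)[OF op_norm_unitary_mat_le]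
      unitary_mat_mult[OF unitary_mat_adjoint[OF X] unitary_mat_adjoint[OF Y]]
    by metis
  also have "\<dots> \<le> op_norm Q * op_norm P + op_norm P * op_norm Q"
    using op_norm_diff_le[of "Q ** P" "P ** Q"] op_norm_mult_le[of Q P] op_norm_mult_le[of P Q]
    by linarith
  finally show ?thesis by (simp add: dSU_def P_def Q_def)
qed

text \<open>Uses the identity \<open>[X, Y] = [X Y, X\<^sup>*]\<close>.\<close>
lemma dist_one_commutator_le_product:
  assumes X: "unitary_mat X" and Y: "unitary_mat Y"
  shows "dist_one (mat_commutator X Y) \<le> 2 * dist_one (X ** Y) * dist_one X"
proof -
  have "mat_commutator (X ** Y) (adjoint_mat X)
      = X ** Y ** adjoint_mat X ** adjoint_mat Y ** (adjoint_mat X ** X)"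
    by (simp add: mat_commutator_def adjoint_mat_mult matrix_mul_assoc)
  then have "mat_commutator X Y = mat_commutator (X ** Y) (adjoint_mat X)"
    using X by (simp add: mat_commutator_def unitary_mat_def)
  also have "dist_one \<dots> \<le> 2 * dist_one (X ** Y) * dist_one (adjoint_mat X)"
    by (rule dist_one_commutator_le) (simp_all add: X Y unitary_mat_mult unitary_mat_adjoint)
  also have "\<dots> \<le> 2 * dist_one (X ** Y) * dist_one X"
    using dist_one_adjoint_le[OF X] dist_one_nonneg[of "X ** Y"] by (simp add: mult_left_mono)
  finally show ?thesis .
qed

lemma dist_one_commutator_le_4:
  assumes X: "unitary_mat X" and Y: "unitary_mat Y"
  shows "dist_one (mat_commutator X Y) \<le> 4 * dist_one X"
    and "dist_one (mat_commutator X Y) \<le> 4 * dist_one Y"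
proof -
  note comm = dist_one_commutator_le[OF X Y]
  have "2 * dist_one X * dist_one Y \<le> 2 * dist_one X * 2"
    using mult_left_mono[OF dist_one_unitary_le_2[OF Y], of "2 * dist_one X"] dist_one_nonneg[of X]
    by simp
  then show "dist_one (mat_commutator X Y) \<le> 4 * dist_one X"
    using comm by linarith
  have "2 * dist_one X * dist_one Y \<le> 2 * 2 * dist_one Y"
    using mult_right_mono[OF dist_one_unitary_le_2[OF X], of "dist_one Y"] dist_one_nonneg[of Y]
    by simp
  then show "dist_one (mat_commutator X Y) \<le> 4 * dist_one Y"
    using comm by linarith
qed

section \<open>Words and word maps\<close>

definition inverse_letter :: "letter \<Rightarrow> letter" where
  "inverse_letter l = (fst l, \<not> snd l)"

definition inverse_word :: "letter list \<Rightarrow> letter list" where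
  "inverse_word w = rev (map inverse_letter w)"

definition word_commutator :: "letter list \<Rightarrow> letter list \<Rightarrow> letter list" where
  "word_commutator X Y = X @ Y @ inverse_word X @ inverse_word Y"

lemma inverse_letter_inverse_letter [simp]: "inverse_letter (inverse_letter l) = l"
  by (simp add: inverse_letter_def)

lemma inverse_letters_inverse_letter [simp]:
  "inverse_letters (inverse_letter a) (inverse_letter b) = inverse_letters a b"
  by (auto simp: inverse_letter_def inverse_letters_def)

lemma inverse_letters_commute: "inverse_letters a b = inverse_letters b a"
  by (auto simp: inverse_letters_def)

lemma inverse_word_Nil [simp]: "inverse_word [] = []"
  by (simp add: inverse_word_def)

lemma inverse_word_Cons: "inverse_word (x # w) = inverse_word w @ [inverse_letter x]"
  by (simp add: inverse_word_def)

lemma inverse_word_eq_Nil_iff [simp]: "inverse_word w = [] \<longleftrightarrow> w = []"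
  by (simp add: inverse_word_def)

lemma length_inverse_word [simp]: "length (inverse_word w) = length w"
  by (simp add: inverse_word_def)

lemma hd_inverse_word: "w \<noteq> [] \<Longrightarrow> hd (inverse_word w) = inverse_letter (last w)"
  by (simp add: inverse_word_def hd_rev last_map)

lemma last_inverse_word: "w \<noteq> [] \<Longrightarrow> last (inverse_word w) = inverse_letter (hd w)"
  by (simp add: inverse_word_def last_rev hd_map)

lemma length_word_commutator: "length (word_commutator X Y) = 2 * length X + 2 * length Y"
  by (simp add: word_commutator_def)

lemma reduced_word_Nil [simp]: "reduced_word []"
  by (simp add: reduced_word_def)

lemma reduced_word_Cons:
  "reduced_word (x # xs) \<longleftrightarrow> reduced_word xs \<and> (xs \<noteq> [] \<longrightarrow> \<not> inverse_letters x (hd xs))"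
  unfolding reduced_word_def
  by (cases xs) (auto simp: less_Suc_eq_0_disj nth_Cons split: nat.splits)

lemma reduced_word_append:
  "reduced_word (xs @ ys) \<longleftrightarrow> reduced_word xs \<and> reduced_word ys \<and>
     (xs \<noteq> [] \<longrightarrow> ys \<noteq> [] \<longrightarrow> \<not> inverse_letters (last xs) (hd ys))"
  by (induction xs) (auto simp: reduced_word_Cons)

lemma reduced_word_inverse_word: "reduced_word w \<Longrightarrow> reduced_word (inverse_word w)"
  by (induction w)
    (auto simp: inverse_word_Cons reduced_word_append reduced_word_Cons last_inverse_word
      inverse_letters_commute)

lemma reduced_word_replicate: "reduced_word (replicate m l)"
  by (induction m) (auto simp: reduced_word_Cons inverse_letters_def)

lemma reduced_word_commutator:
  assumes "reduced_word X" "reduced_word Y" "X \<noteq> []" "Y \<noteq> []"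
    and "\<not> inverse_letters (last X) (hd Y)" "last Y \<noteq> last X"
    and "\<not> inverse_letters (hd X) (last Y)"
  shows "reduced_word (word_commutator X Y)"
    and "word_commutator X Y \<noteq> []"
    and "hd (word_commutator X Y) = hd X"
    and "last (word_commutator X Y) = inverse_letter (hd Y)"
proof -
  have "\<not> inverse_letters (last Y) (inverse_letter (last X))"
    using assms(6) by (auto simp: inverse_letters_def inverse_letter_def prod_eq_iff)
  then show "reduced_word (word_commutator X Y)"
    using assms reduced_word_inverse_word[OF assms(1)] reduced_word_inverse_word[OF assms(2)]
    by (simp add: word_commutator_def reduced_word_append hd_inverse_word last_inverse_word)
qed (use assms in \<open>simp_all add: word_commutator_def last_inverse_word\<close>)

lemma eval_letter_unitary:
  "unitary_mat u \<Longrightarrow> unitary_mat v \<Longrightarrow> unitary_mat (eval_letter u v l)"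
  by (auto simp: eval_letter_def Let_def matrix_inv_unitary_mat unitary_mat_adjoint)

lemma eval_inverse_letter:
  "unitary_mat u \<Longrightarrow> unitary_mat v \<Longrightarrow>
     eval_letter u v (inverse_letter l) = adjoint_mat (eval_letter u v l)"
  by (auto simp: eval_letter_def Let_def matrix_inv_unitary_mat inverse_letter_def)

lemma word_map_Nil [simp]: "word_map [] u v = mat 1"
  by (simp add: word_map_def)

lemma word_map_Cons: "word_map (x # w) u v = eval_letter u v x ** word_map w u v"
  by (simp add: word_map_def)

lemma word_map_append: "word_map (xs @ ys) u v = word_map xs u v ** word_map ys u v"
  by (induction xs) (simp_all add: word_map_Cons matrix_mul_assoc)

lemma unitary_mat_word_map:
  "unitary_mat u \<Longrightarrow> unitary_mat v \<Longrightarrow> unitary_mat (word_map w u v)"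
  by (induction w) (simp_all add: word_map_Cons unitary_mat_mult eval_letter_unitary)

lemma word_map_inverse_word:
  "unitary_mat u \<Longrightarrow> unitary_mat v \<Longrightarrow> word_map (inverse_word w) u v = adjoint_mat (word_map w u v)"
  by (induction w)
    (simp_all add: inverse_word_Cons word_map_append word_map_Cons eval_inverse_letter adjoint_mat_mult)

lemma word_map_commutator:
  "unitary_mat u \<Longrightarrow> unitary_mat v \<Longrightarrow>
     word_map (word_commutator X Y) u v = mat_commutator (word_map X u v) (word_map Y u v)"
  by (simp add: word_commutator_def mat_commutator_def word_map_append word_map_inverse_word
      matrix_mul_assoc)

section \<open>Golden words\<close>

fun golden_pair :: "letter \<Rightarrow> letter \<Rightarrow> nat \<Rightarrow> nat \<Rightarrow> nat \<Rightarrow> letter list \<times> letter list" where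
  "golden_pair p q m m' 0 = (replicate m p, replicate m' q)"
| "golden_pair p q m m' (Suc n) =
    (fst (golden_pair p q m m' n) @ snd (golden_pair p q m m' n),
     inverse_word (fst (golden_pair p q m m' n)) @ inverse_word (snd (golden_pair p q m m' n)))"

definition golden_word :: "letter \<Rightarrow> letter \<Rightarrow> nat \<Rightarrow> nat \<Rightarrow> nat \<Rightarrow> letter list" where
  "golden_word p q m m' n = fst (golden_pair p q m m' n) @ snd (golden_pair p q m m' n)"

lemma fst_golden_pair_Suc: "fst (golden_pair p q m m' (Suc n)) = golden_word p q m m' n"
  by (simp add: golden_word_def)

lemma golden_word_Suc:
  "golden_word p q m m' (Suc n) =
     word_commutator (fst (golden_pair p q m m' n)) (snd (golden_pair p q m m' n))"
  by (simp add: golden_word_def word_commutator_def)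

lemma length_golden_word: "length (golden_word p q m m' n) = 2 ^ n * (m + m')"
proof -
  have "length (fst (golden_pair p q m m' n)) + length (snd (golden_pair p q m m' n)) = 2 ^ n * (m + m')"
    by (induction n) auto
  then show ?thesis by (simp add: golden_word_def)
qed

text \<open>The first and last letters of the two components of \<open>golden_pair p q m m' n\<close>.\<close>
definition golden_pair_ends :: "letter \<Rightarrow> letter \<Rightarrow> nat \<Rightarrow> letter \<times> letter \<times> letter \<times> letter" where
  "golden_pair_ends p q n =
     (if n mod 3 = 0 then (p, p, q, q)
      else if n mod 3 = 1 then (p, q, inverse_letter p, inverse_letter q)
      else (p, inverse_letter q, inverse_letter q, p))"

lemma golden_pair_reduced:
  assumes pq: "fst p \<noteq> fst q" and m: "m \<ge> 1" "m' \<ge> 1"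
  shows "golden_pair p q m m' n = (X, Y) \<Longrightarrow> X \<noteq> [] \<and> Y \<noteq> [] \<and> reduced_word (X @ Y) \<and>
    (hd X, last X, hd Y, last Y) = golden_pair_ends p q n"
proof (induction n arbitrary: X Y)
  case 0
  have "\<not> inverse_letters p q" using pq by (simp add: inverse_letters_def)
  then show ?case
    using m 0 by (auto simp: golden_pair_ends_def reduced_word_append reduced_word_replicate)
next
  case (Suc n X Y)
  obtain P D where PD: "golden_pair p q m m' n = (P, D)"
    by fastforce
  have XY: "X = P @ D" "Y = inverse_word P @ inverse_word D"
    using Suc.prems PD by simp_all
  have IH: "P \<noteq> []" "D \<noteq> []" "reduced_word (P @ D)" "(hd P, last P, hd D, last D) = golden_pair_ends p q n"
    using Suc.IH[OF PD] by simp_all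
  have "\<not> inverse_letters (last D) (inverse_letter (last P))"
    "\<not> inverse_letters (inverse_letter (hd P)) (inverse_letter (last D))"
    "\<not> inverse_letters (last P) (hd D)"
    using IH(4) pq unfolding golden_pair_ends_def
    by (auto simp: inverse_letters_def inverse_letter_def prod_eq_iff split: if_splits)
  then have "reduced_word (X @ Y)"
    using IH reduced_word_inverse_word[of P] reduced_word_inverse_word[of D]
    by (simp add: XY reduced_word_append hd_inverse_word last_inverse_word)
  moreover have "(hd X, last X, hd Y, last Y) = golden_pair_ends p q (Suc n)"
    using IH(1,2,4) unfolding XY golden_pair_ends_def
    by (auto simp: hd_inverse_word last_inverse_word mod_Suc split: if_splits)
  ultimately show ?case using IH(1,2) by (simp add: XY)
qed

lemma golden_word_reduced:
  assumes "fst p \<noteq> fst q" "m \<ge> 1" "m' \<ge> 1" "n mod 3 = 2"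
  shows "reduced_word (golden_word p q m m' n)" and "golden_word p q m m' n \<noteq> []"
    and "hd (golden_word p q m m' n) = p" and "last (golden_word p q m m' n) = p"
  using golden_pair_reduced[OF assms(1-3), of n "fst (golden_pair p q m m' n)" "snd (golden_pair p q m m' n)"]
    assms(4)
  by (auto simp: golden_word_def golden_pair_ends_def)

lemma dist_one_golden_word_Suc:
  assumes "unitary_mat u" "unitary_mat v"
  shows "dist_one (word_map (golden_word p q m m' (Suc n)) u v)
    \<le> 2 * dist_one (word_map (golden_word p q m m' n) u v)
        * dist_one (word_map (fst (golden_pair p q m m' n)) u v)"
proof -
  let ?X = "word_map (fst (golden_pair p q m m' n)) u v"
  let ?Y = "word_map (snd (golden_pair p q m m' n)) u v"
  have "word_map (golden_word p q m m' (Suc n)) u v = mat_commutator ?X ?Y"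
    by (simp add: golden_word_Suc word_map_commutator assms)
  moreover have "word_map (golden_word p q m m' n) u v = ?X ** ?Y"
    by (simp add: golden_word_def word_map_append)
  ultimately show ?thesis
    using dist_one_commutator_le_product unitary_mat_word_map[OF assms] by metis
qed

lemma golden_ratio_square: "golden_ratio ^ 2 = golden_ratio + 1"
  unfolding golden_ratio_def by (simp add: power2_eq_square field_simps)

lemma golden_ratio_gt_1: "golden_ratio > 1"
  unfolding golden_ratio_def by (simp add: real_less_rsqrt)

lemma golden_ratio_le_2: "golden_ratio \<le> 2"
proof -
  have "sqrt 5 \<le> sqrt (3^2)" by (rule real_sqrt_le_mono) simp
  then show ?thesis unfolding golden_ratio_def by simp
qed

lemma golden_ratio_power_ge: "2 * real k \<le> golden_ratio ^ (3 * k + 2)"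
proof -
  have cube: "golden_ratio ^ 3 = 2 * golden_ratio + 1"
    using golden_ratio_square by (simp add: power3_eq_cube power2_eq_square algebra_simps)
  have "real k * 2 \<le> real k * (golden_ratio ^ 3 - 1)"
    using golden_ratio_gt_1 by (intro mult_left_mono) (simp_all add: cube)
  then have "2 * real k \<le> 1 + real k * (golden_ratio ^ 3 - 1)"
    by simp
  also have "\<dots> \<le> (1 + (golden_ratio ^ 3 - 1)) ^ k"
    by (rule Bernoulli_inequality) (use golden_ratio_gt_1 in \<open>simp add: cube\<close>)
  also have "\<dots> = golden_ratio ^ (3 * k)"
    by (simp add: power_mult)
  also have "\<dots> \<le> golden_ratio ^ (3 * k + 2)"
    using golden_ratio_gt_1 by (intro power_increasing) auto
  finally show ?thesis .
qed

lemma fibonacci_decay: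
  fixes g :: "nat \<Rightarrow> real" and r :: real
  assumes "\<And>n. g n \<ge> 0" and "\<And>n. g (Suc (Suc n)) \<le> g (Suc n) * g n"
    and "0 < r" and "g 0 \<le> r" and "g 1 \<le> r powr golden_ratio"
  shows "g n \<le> r powr (golden_ratio ^ n)"
proof -
  have "g n \<le> r powr (golden_ratio ^ n) \<and> g (Suc n) \<le> r powr (golden_ratio ^ Suc n)"
  proof (induction n)
    case 0
    then show ?case using assms(3-5) by simp
  next
    case (Suc n)
    have "g (Suc (Suc n)) \<le> g (Suc n) * g n" by (rule assms(2))
    also have "\<dots> \<le> r powr (golden_ratio ^ Suc n) * r powr (golden_ratio ^ n)"
      using Suc.IH assms(1) by (intro mult_mono) auto
    also have "\<dots> = r powr (golden_ratio ^ n * (golden_ratio + 1))"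
      by (simp add: powr_add[symmetric] algebra_simps)
    also have "\<dots> = r powr (golden_ratio ^ Suc (Suc n))"
      by (simp add: golden_ratio_square[symmetric] power2_eq_square mult_ac)
    finally show ?case using Suc.IH by simp
  qed
  then show ?thesis by simp
qed

lemma dist_one_golden_word_le:
  assumes uv: "unitary_mat u" "unitary_mat v"
    and start: "dist_one (word_map (replicate m p) u v) \<le> 1/4"
      "dist_one (word_map (golden_word p q m m' 0) u v) \<le> 1/8"
  shows "dist_one (word_map (golden_word p q m m' n) u v) \<le> (1/2) powr (golden_ratio ^ n)"
proof -
  define g where "g n = 2 * dist_one (word_map (fst (golden_pair p q m m' n)) u v)" for n
  have "(1/4 :: real) = (1/2) powr 2"
    by (simp add: power2_eq_square)
  also have "\<dots> \<le> (1/2) powr golden_ratio"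
    using golden_ratio_le_2 by (intro powr_mono') auto
  finally have quarter: "(1/4 :: real) \<le> (1/2) powr golden_ratio" .
  have "g (Suc n) \<le> (1/2) powr (golden_ratio ^ Suc n)"
  proof (rule fibonacci_decay)
    show "g k \<ge> 0" for k
      by (simp add: g_def dist_one_nonneg)
    show "g (Suc (Suc k)) \<le> g (Suc k) * g k" for k
      using dist_one_golden_word_Suc[OF uv, of p q m m' k]
      unfolding g_def fst_golden_pair_Suc by (simp add: mult_ac)
    show "g 0 \<le> 1/2" "g 1 \<le> (1/2) powr golden_ratio"
      using start quarter by (simp_all add: g_def fst_golden_pair_Suc[of _ _ _ _ 0, simplified])
  qed simp
  also have "\<dots> \<le> (1/2) powr (golden_ratio ^ n)"
    using golden_ratio_gt_1 by (intro powr_mono') auto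
  finally have "2 * dist_one (word_map (golden_word p q m m' n) u v) \<le> (1/2) powr (golden_ratio ^ n)"
    unfolding g_def fst_golden_pair_Suc .
  then show ?thesis
    using dist_one_nonneg[of "word_map (golden_word p q m m' n) u v"] by linarith
qed

section \<open>Uniform recurrence\<close>

lemma compact_close_pair:
  fixes S :: "'a::metric_space set"
  assumes "compact S" "\<delta> > 0"
  obtains N :: nat where "\<And>f. (\<And>i. f i \<in> S) \<Longrightarrow> \<exists>a b. a < b \<and> b \<le> N \<and> dist (f a) (f b) < \<delta>"
proof -
  have "S \<subseteq> (\<Union>c\<in>S. ball c (\<delta> / 2))"
    using assms(2) by force
  then obtain C where C: "finite C" "S \<subseteq> (\<Union>c\<in>C. ball c (\<delta> / 2))"
    by (rule compactE_image[OF assms(1) open_ball])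
  have "\<exists>a b. a < b \<and> b \<le> card C \<and> dist (f a) (f b) < \<delta>" if f: "\<And>i. f i \<in> S" for f
  proof -
    have "\<forall>i. \<exists>c. c \<in> C \<and> dist c (f i) < \<delta> / 2"
      using C(2) f by fastforce
    then obtain h where h: "\<And>i. h i \<in> C" "\<And>i. dist (h i) (f i) < \<delta> / 2"
      by metis
    have "card (h ` {0..card C}) \<le> card C"
      using h(1) by (intro card_mono[OF C(1)]) blast
    then have "\<not> inj_on h {0..card C}"
      by (intro pigeonhole) simp
    then obtain i j where ij: "i \<le> card C" "j \<le> card C" "i \<noteq> j" "h i = h j"
      unfolding inj_on_def by auto
    have close: "dist (f i) (f j) < \<delta>" "dist (f j) (f i) < \<delta>"
      using dist_triangle3[of "f i" "f j" "h i"] h(2)[of i] h(2)[of j] ij(4)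
      by (simp_all add: dist_commute)
    show ?thesis
    proof (cases "i < j")
      case True
      then show ?thesis using ij close by blast
    next
      case False
      then have "j < i" using ij(3) by simp
      then show ?thesis using ij close by blast
    qed
  qed
  then show ?thesis by (rule that)
qed

fun mat_power :: "complex^'n^'n \<Rightarrow> nat \<Rightarrow> complex^'n^'n" where
  "mat_power g 0 = mat 1"
| "mat_power g (Suc m) = g ** mat_power g m"

lemma mat_power_add: "mat_power g (i + j) = mat_power g i ** mat_power g j"
  by (induction i) (simp_all add: matrix_mul_assoc)

lemma unitary_mat_power: "unitary_mat g \<Longrightarrow> unitary_mat (mat_power g m)"
  by (induction m) (simp_all add: unitary_mat_mult)

lemma word_map_replicate: "word_map (replicate m l) u v = mat_power (eval_letter u v l) m"
  by (induction m) (simp_all add: word_map_Cons)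

lemma uniform_return_time:
  assumes "\<eta> > 0"
  obtains M :: nat where
    "\<And>g :: complex^'n^'n. unitary_mat g \<Longrightarrow> \<exists>m. 1 \<le> m \<and> m \<le> M \<and> dist_one (mat_power g m) < \<eta>"
proof -
  define K where "K = real CARD('n)"
  have K: "K > 0" by (simp add: K_def)
  then have "\<eta> / K^2 > 0" using assms by simp
  then obtain N :: nat where N: "\<And>f. (\<And>i. f i \<in> cball (0 :: complex^'n^'n) K) \<Longrightarrow>
      \<exists>a b. a < b \<and> b \<le> N \<and> dist (f a) (f b) < \<eta> / K^2"
    using compact_close_pair[OF compact_cball[of "0 :: complex^'n^'n" K]] by blast
  have "\<exists>m. 1 \<le> m \<and> m \<le> N \<and> dist_one (mat_power g m) < \<eta>"
    if g: "unitary_mat g" for g :: "complex^'n^'n"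
  proof -
    have "mat_power g i \<in> cball 0 K" for i
      using norm_unitary_mat_le[OF unitary_mat_power[OF g, of i]] by (simp add: K_def)
    then obtain a b where ab: "a < b" "b \<le> N" "dist (mat_power g a) (mat_power g b) < \<eta> / K^2"
      using N[of "mat_power g"] by blast
    define m where "m = b - a"
    have ga: "unitary_mat (mat_power g a)" by (rule unitary_mat_power[OF g])
    have "mat_power g b = mat_power g a ** mat_power g m"
      using ab mat_power_add[of g a m] by (simp add: m_def)
    then have "mat 1 - mat_power g m = adjoint_mat (mat_power g a) ** (mat_power g a - mat_power g b)"
      using ga by (simp add: matrix_diff_ldistrib matrix_mul_assoc unitary_mat_def)
    then have "dist_one (mat_power g m) \<le> op_norm (mat_power g a - mat_power g b)"
      using op_norm_mult_contraction_le(1)[OF op_norm_unitary_mat_le[OF unitary_mat_adjoint[OF ga]]]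
      by (simp add: dSU_def)
    also have "\<dots> \<le> K^2 * dist (mat_power g a) (mat_power g b)"
      using op_norm_le_norm[of "mat_power g a - mat_power g b"] by (simp add: K_def dist_norm)
    also have "\<dots> < \<eta>"
      using ab(3) K by (simp add: pos_less_divide_eq mult.commute)
    finally have "dist_one (mat_power g m) < \<eta>" .
    moreover have "1 \<le> m" "m \<le> N"
      using ab by (auto simp: m_def)
    ultimately show ?thesis by blast
  qed
  then show ?thesis by (rule that)
qed

section \<open>Nested commutators\<close>

definition letter_a :: letter where "letter_a = (False, False)"
definition letter_b :: letter where "letter_b = (True, False)"

lemma eval_letter_a [simp]: "eval_letter u v letter_a = u"
  by (simp add: eval_letter_def letter_a_def)

lemma eval_letter_b [simp]: "eval_letter u v letter_b = v"
  by (simp add: eval_letter_def letter_b_def)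

definition golden_word_a :: "nat \<Rightarrow> nat \<times> nat \<Rightarrow> letter list" where
  "golden_word_a N j = golden_word letter_a letter_b (fst j) (snd j) N"

definition golden_word_b :: "nat \<Rightarrow> nat \<times> nat \<Rightarrow> letter list" where
  "golden_word_b N j = golden_word letter_b letter_a (snd j) (fst j) N"

text \<open>Each commutator is taken twice so that the first and last letters of the nested word
  return to \<open>a\<close> and \<open>a\<^sup>-\<^sup>1\<close>; this keeps all the words reduced.\<close>
definition nest_step :: "nat \<Rightarrow> nat \<times> nat \<Rightarrow> letter list \<Rightarrow> letter list" where
  "nest_step N j Y = word_commutator (golden_word_a N j) (word_commutator (golden_word_a N j)
     (word_commutator (golden_word_b N j) (word_commutator (golden_word_b N j) Y)))"

definition nested_word :: "nat \<Rightarrow> (nat \<times> nat) list \<Rightarrow> letter list" where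
  "nested_word N js = foldr (nest_step N) js [letter_a, letter_b, inverse_letter letter_a]"

lemma nested_word_reduced:
  assumes N: "N mod 3 = 2" and js: "\<forall>j\<in>set js. fst j \<ge> 1 \<and> snd j \<ge> 1"
  shows "reduced_word (nested_word N js) \<and> nested_word N js \<noteq> [] \<and>
    hd (nested_word N js) = letter_a \<and> last (nested_word N js) = inverse_letter letter_a"
  using js
proof (induction js)
  case Nil
  show ?case
    by (simp add: nested_word_def reduced_word_Cons letter_a_def letter_b_def inverse_letter_def
        inverse_letters_def)
next
  case (Cons j js)
  define Y where "Y = nested_word N js"
  have Y: "reduced_word Y" "Y \<noteq> []" "hd Y = letter_a" "last Y = inverse_letter letter_a"
    using Cons by (auto simp: Y_def)
  have j: "fst j \<ge> 1" "snd j \<ge> 1" using Cons.prems by auto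
  have ab: "fst letter_a \<noteq> fst letter_b" "fst letter_b \<noteq> fst letter_a"
    by (simp_all add: letter_a_def letter_b_def)
  note A = golden_word_reduced[OF ab(1) j N, folded golden_word_a_def]
  note B = golden_word_reduced[OF ab(2) j(2) j(1) N, folded golden_word_b_def]
  note letters = letter_a_def letter_b_def inverse_letters_def inverse_letter_def
  define Y1 where "Y1 = word_commutator (golden_word_b N j) Y"
  have Y1: "reduced_word Y1" "Y1 \<noteq> []" "hd Y1 = letter_b" "last Y1 = inverse_letter letter_a"
    using reduced_word_commutator[OF B(1) Y(1) B(2) Y(2)] B Y unfolding Y1_def
    by (simp_all add: letters)
  define Y2 where "Y2 = word_commutator (golden_word_b N j) Y1"
  have Y2: "reduced_word Y2" "Y2 \<noteq> []" "hd Y2 = letter_b" "last Y2 = inverse_letter letter_b"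
    using reduced_word_commutator[OF B(1) Y1(1) B(2) Y1(2)] B Y1 unfolding Y2_def
    by (simp_all add: letters)
  define Y3 where "Y3 = word_commutator (golden_word_a N j) Y2"
  have Y3: "reduced_word Y3" "Y3 \<noteq> []" "hd Y3 = letter_a" "last Y3 = inverse_letter letter_b"
    using reduced_word_commutator[OF A(1) Y2(1) A(2) Y2(2)] A Y2 unfolding Y3_def
    by (simp_all add: letters)
  have "nested_word N (j # js) = word_commutator (golden_word_a N j) Y3"
    by (simp add: nested_word_def nest_step_def Y_def Y1_def Y2_def Y3_def)
  then show ?case
    using reduced_word_commutator[OF A(1) Y3(1) A(2) Y3(2)] A Y3 by (simp add: letters)
qed

lemma dist_one_nested_word_le:
  assumes u: "unitary_mat u" and v: "unitary_mat v" and j: "j \<in> set js"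
  shows "dist_one (word_map (nested_word N js) u v) \<le> 4 ^ (4 * length js) * dist_one (word_map (golden_word_a N j) u v)"
  using j
proof (induction js)
  case Nil
  then show ?case by simp
next
  case (Cons k js)
  let ?d = "\<lambda>w. dist_one (word_map w u v)"
  have comm: "?d (word_commutator X Y) \<le> 4 * ?d X" "?d (word_commutator X Y) \<le> 4 * ?d Y" for X Y
    using dist_one_commutator_le_4[OF unitary_mat_word_map[OF u v] unitary_mat_word_map[OF u v]]
    by (simp_all add: word_map_commutator u v)
  define Y where "Y = nested_word N js"
  have step: "nested_word N (k # js) = nest_step N k Y"
    by (simp add: nested_word_def Y_def)
  have pow: "(4::real) ^ (4 * length (k # js)) = 4 * 4 * 4 * 4 * 4 ^ (4 * length js)"
    by (simp add: power_add)
  show ?case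
  proof (cases "j = k")
    case True
    have "?d (nest_step N k Y) \<le> 4 * ?d (golden_word_a N j)"
      unfolding nest_step_def True by (rule comm(1))
    also have "\<dots> \<le> 4 ^ (4 * length (k # js)) * ?d (golden_word_a N j)"
      using power_increasing[of 1 "4 * length (k # js)" "4::real"]
      by (intro mult_right_mono dist_one_nonneg) simp_all
    finally show ?thesis unfolding step .
  next
    case False
    then have "j \<in> set js" using Cons.prems by simp
    define Y1 where "Y1 = word_commutator (golden_word_b N k) Y"
    define Y2 where "Y2 = word_commutator (golden_word_b N k) Y1"
    define Y3 where "Y3 = word_commutator (golden_word_a N k) Y2"
    have "?d Y1 \<le> 4 * ?d Y" "?d Y2 \<le> 4 * ?d Y1" "?d Y3 \<le> 4 * ?d Y2"
      "?d (nest_step N k Y) \<le> 4 * ?d Y3"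
      unfolding Y1_def Y2_def Y3_def nest_step_def by (rule comm(2))+
    then have "?d (nest_step N k Y) \<le> 4 * 4 * 4 * 4 * ?d Y"
      by linarith
    also have "\<dots> \<le> 4 * 4 * 4 * 4 * (4 ^ (4 * length js) * ?d (golden_word_a N j))"
      using Cons.IH[OF \<open>j \<in> set js\<close>] by (simp add: Y_def)
    finally show ?thesis unfolding step pow by (simp add: mult_ac)
  qed
qed

lemma length_nested_word_le:
  assumes "\<forall>j\<in>set js. length (golden_word_a N j) \<le> S \<and> length (golden_word_b N j) \<le> S"
  shows "length (nested_word N js) \<le> 4 ^ (4 * length js) * (3 + S)"
  using assms
proof (induction js)
  case Nil
  then show ?case by (simp add: nested_word_def)
next
  case (Cons k js)
  have "length (nested_word N (k # js))
      = 6 * length (golden_word_a N k) + 24 * length (golden_word_b N k) + 16 * length (nested_word N js)"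
    by (simp add: nested_word_def nest_step_def length_word_commutator)
  also have "\<dots> \<le> 30 * S + 16 * (4 ^ (4 * length js) * (3 + S))"
    using Cons by auto
  also have "\<dots> \<le> 256 * (4 ^ (4 * length js) * (3 + S))"
  proof -
    have "3 + S \<le> 4 ^ (4 * length js) * (3 + S)"
      by simp
    then show ?thesis by linarith
  qed
  finally show ?case by (simp add: power_add)
qed

section \<open>The almost law\<close>

lemma power_four_mult_half_powr_le:
  fixes K :: nat and x :: real
  assumes "16 * real K \<le> x"
  shows "4 ^ (4 * K) * (1/2) powr x \<le> (1/2) powr (x / 2)"
proof -
  have "(4::real) ^ (4 * K) = (2 ^ 2) ^ (4 * K)"
    by simp
  also have "\<dots> = 2 ^ (8 * K)"
    by (simp only: power_mult[symmetric]) simp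
  finally have one: "(4::real) ^ (4 * K) * (1/2) powr (8 * real K) = 1"
    using powr_realpow[of "1/2::real" "8 * K"] by (simp add: power_mult_distrib[symmetric])
  have "4 ^ (4 * K) * (1/2) powr x = (1/2) powr (x - 8 * real K) * (4 ^ (4 * K) * (1/2) powr (8 * real K))"
    by (simp add: ac_simps flip: powr_add)
  also have "\<dots> = (1/2) powr (x - 8 * real K)"
    by (simp add: one)
  also have "\<dots> \<le> (1/2) powr (x / 2)"
    using assms by (intro powr_mono') auto
  finally show ?thesis .
qed

lemma half_powr_le_exp_length:
  fixes l N :: nat
  assumes "real l \<le> D * 2 ^ N" and "D > 0"
  shows "(1/2) powr (golden_ratio ^ N / 2)
    \<le> exp (- (ln 2 / (2 * D powr log 2 golden_ratio)) * real l powr log 2 golden_ratio)"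
proof -
  define a where "a = log 2 golden_ratio"
  have "a > 0" using golden_ratio_gt_1 by (simp add: a_def)
  have "(2 ^ N :: real) powr a = (2 powr a) powr real N"
    by (simp add: powr_realpow[symmetric] powr_powr mult.commute)
  also have "\<dots> = golden_ratio ^ N"
    using golden_ratio_gt_1 by (simp add: a_def powr_realpow)
  finally have "real l powr a \<le> D powr a * golden_ratio ^ N"
    using powr_mono2[OF less_imp_le[OF \<open>a > 0\<close>] of_nat_0_le_iff assms(1)] assms(2)
    by (simp add: powr_mult)
  then have "ln 2 / (2 * D powr a) * real l powr a \<le> ln 2 / 2 * golden_ratio ^ N"
    using assms(2) by (simp add: field_simps)
  moreover have "(1/2::real) powr (golden_ratio ^ N / 2) = exp (- (ln 2 / 2 * golden_ratio ^ N))"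
    by (simp add: powr_def ln_div)
  ultimately show ?thesis by (simp add: a_def)
qed

lemma L_SU_le:
  assumes "\<And>u v. u \<in> SU T \<Longrightarrow> v \<in> SU T \<Longrightarrow> dSU (mat 1) (word_map w u v) \<le> b"
  shows "L_SU T w \<le> b"
  unfolding L_SU_def by (rule cSUP_least) (use assms mat_1_SU in auto)

lemma almost_law_of_power_bound:
  assumes "\<And>n. reduced_word (ws n) \<and> ws n \<noteq> []"
    and "\<And>n u v. u \<in> SU T \<Longrightarrow> v \<in> SU T \<Longrightarrow> dSU (mat 1) (word_map (ws n) u v) \<le> c ^ n"
    and "0 < c" "c < 1"
  shows "almost_law T ws"
  unfolding almost_law_def
proof (intro conjI allI impI)
  show "reduced_word (ws n)" "ws n \<noteq> []" for n
    using assms(1) by simp_all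
  fix \<epsilon> :: real
  assume "\<epsilon> > 0"
  then obtain N where N: "c ^ N < \<epsilon>"
    using real_arch_pow_inv assms(3,4) by blast
  have "dSU (mat 1) (word_map (ws n) u v) < \<epsilon>" if "n \<ge> N" "u \<in> SU T" "v \<in> SU T" for n u v
  proof -
    have "c ^ n \<le> c ^ N"
      using that(1) assms(3,4) by (simp add: power_decreasing)
    then show ?thesis
      using assms(2)[OF that(2,3), of n] N by linarith
  qed
  then show "\<exists>N. \<forall>n\<ge>N. \<forall>u\<in>SU T. \<forall>v\<in>SU T. dSU (mat 1) (word_map (ws n) u v) < \<epsilon>"
    by blast
qed

definition return_pairs :: "nat \<Rightarrow> (nat \<times> nat) list" where
  "return_pairs M = List.product [1..<Suc M] [1..<Suc M]"

text \<open>The level is \<open>2 mod 3\<close> so that the golden words begin and end with the same letter;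
  the shift by \<open>16 M\<^sup>2\<close> absorbs the factor \<open>4 ^ (4 M\<^sup>2)\<close> lost in the nesting.\<close>
definition law_level :: "nat \<Rightarrow> nat \<Rightarrow> nat" where
  "law_level M t = 3 * (t + 16 * M^2) + 2"

definition law_word :: "nat \<Rightarrow> nat \<Rightarrow> letter list" where
  "law_word M t = nested_word (law_level M t) (return_pairs M)"

lemma length_return_pairs: "length (return_pairs M) = M^2"
  by (simp add: return_pairs_def power2_eq_square)

lemma law_word_reduced: "reduced_word (law_word M t) \<and> law_word M t \<noteq> []"
proof -
  have "(3 * n + 2) mod 3 = (2 :: nat)" for n
    by presburger
  then have "law_level M t mod 3 = 2"
    by (simp only: law_level_def)
  then show ?thesis
    using nested_word_reduced[of "law_level M t" "return_pairs M"]
    by (auto simp: law_word_def return_pairs_def)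
qed

lemma golden_ratio_power_law_level:
  shows "2 * real t \<le> golden_ratio ^ law_level M t"
    and "16 * real (M^2) \<le> golden_ratio ^ law_level M t"
proof -
  have bound: "2 * (real t + 16 * real (M^2)) \<le> golden_ratio ^ law_level M t"
    using golden_ratio_power_ge[of "t + 16 * M^2"]
    by (simp only: law_level_def of_nat_add of_nat_mult of_nat_numeral)
  show "2 * real t \<le> golden_ratio ^ law_level M t"
    by (rule order_trans[OF _ bound]) simp
  show "16 * real (M^2) \<le> golden_ratio ^ law_level M t"
    by (rule order_trans[OF _ bound]) simp
qed

lemma dist_one_law_word_le:
  fixes u v :: "complex^'n^'n"
  assumes M: "\<And>g :: complex^'n^'n. unitary_mat g \<Longrightarrow> \<exists>m. 1 \<le> m \<and> m \<le> M \<and> dist_one (mat_power g m) < 1/16"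
    and u: "unitary_mat u" and v: "unitary_mat v"
  shows "dist_one (word_map (law_word M t) u v) \<le> (1/2) powr (golden_ratio ^ law_level M t / 2)"
proof -
  obtain m m' where m: "1 \<le> m" "m \<le> M" "dist_one (mat_power u m) < 1/16"
    and m': "1 \<le> m'" "m' \<le> M" "dist_one (mat_power v m') < 1/16"
    using M u v by blast
  let ?N = "law_level M t"
  have "dist_one (word_map (golden_word letter_a letter_b m m' 0) u v) \<le> 1/8"
    using dist_one_mult_le[OF unitary_mat_power[OF u], of m "mat_power v m'"] m(3) m'(3)
    by (simp add: golden_word_def word_map_append word_map_replicate)
  then have "dist_one (word_map (golden_word_a ?N (m, m')) u v) \<le> (1/2) powr (golden_ratio ^ ?N)"
    unfolding golden_word_a_def using m(3)
    by (intro dist_one_golden_word_le[OF u v]) (simp_all add: word_map_replicate)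
  moreover have "(m, m') \<in> set (return_pairs M)"
    using m m' by (auto simp: return_pairs_def)
  ultimately have "dist_one (word_map (law_word M t) u v) \<le> 4 ^ (4 * M^2) * (1/2) powr (golden_ratio ^ ?N)"
    using dist_one_nested_word_le[OF u v, of "(m, m')" "return_pairs M" ?N]
    by (simp add: law_word_def length_return_pairs order_trans mult_left_mono)
  also have "\<dots> \<le> (1/2) powr (golden_ratio ^ ?N / 2)"
    using golden_ratio_power_law_level(2)[of M t] by (intro power_four_mult_half_powr_le)
  finally show ?thesis .
qed

lemma length_law_word_le:
  "real (length (law_word M t)) \<le> 4 ^ (4 * M^2) * (3 + 2 * real M) * 2 ^ law_level M t"
proof -
  let ?N = "law_level M t"
  have "\<forall>j\<in>set (return_pairs M).
      length (golden_word_a ?N j) \<le> 2 ^ ?N * (2 * M) \<and> length (golden_word_b ?N j) \<le> 2 ^ ?N * (2 * M)"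
    by (auto simp: return_pairs_def golden_word_a_def golden_word_b_def length_golden_word)
  then have "length (law_word M t) \<le> 4 ^ (4 * M^2) * (3 + 2 ^ ?N * (2 * M))"
    unfolding law_word_def using length_nested_word_le by (metis length_return_pairs)
  also have "\<dots> \<le> 4 ^ (4 * M^2) * ((3 + 2 * M) * 2 ^ ?N)"
    using one_le_power[of 2 ?N] by (intro mult_le_mono2) (simp add: algebra_simps)
  finally have "real (length (law_word M t)) \<le> real (4 ^ (4 * M^2) * ((3 + 2 * M) * 2 ^ ?N))"
    by (simp only: of_nat_le_iff)
  then show ?thesis
    by (simp add: mult.assoc)
qed

theorem theorem3p1:
  fixes T :: "'n::finite itself"
  shows "\<exists>ws C. almost_law T ws \<and> C > 0 \<and>
     (\<forall>n. L_SU T (ws n) \<le> exp (- C * real (word_length (ws n)) powr log 2 golden_ratio))"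
proof -
  obtain M :: nat where M: "\<And>g :: complex^'n^'n. unitary_mat g \<Longrightarrow>
      \<exists>m. 1 \<le> m \<and> m \<le> M \<and> dist_one (mat_power g m) < 1/16"
    using uniform_return_time[of "1/16"] by auto
  define D :: real where "D = 4 ^ (4 * M^2) * (3 + 2 * real M)"
  define C where "C = ln 2 / (2 * D powr log 2 golden_ratio)"
  have "D > 0" by (simp add: D_def)
  then have "C > 0" by (simp add: C_def)
  have dist: "dSU (mat 1) (word_map (law_word M t) u v) \<le> (1/2) powr (golden_ratio ^ law_level M t / 2)"
    if "u \<in> SU T" "v \<in> SU T" for u v t
    using dist_one_law_word_le[OF M] SU_unitary_mat that by blast
  have "almost_law T (law_word M)"
  proof (rule almost_law_of_power_bound[where c = "1/2"])
    fix t and u v :: "complex^'n^'n"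
    assume "u \<in> SU T" "v \<in> SU T"
    then have "dSU (mat 1) (word_map (law_word M t) u v) \<le> (1/2) powr (golden_ratio ^ law_level M t / 2)"
      by (rule dist)
    also have "\<dots> \<le> (1/2) powr real t"
      using golden_ratio_power_law_level(1)[of t M] by (intro powr_mono') (simp_all add: field_simps)
    also have "\<dots> = (1/2) ^ t"
      by (simp add: powr_realpow)
    finally show "dSU (mat 1) (word_map (law_word M t) u v) \<le> (1/2) ^ t" .
  qed (simp_all add: law_word_reduced)
  moreover have "L_SU T (law_word M t) \<le> exp (- C * real (word_length (law_word M t)) powr log 2 golden_ratio)" for t
    using dist half_powr_le_exp_length[OF length_law_word_le \<open>D > 0\<close>[unfolded D_def]]
    unfolding C_def D_def word_length_def by (blast intro: L_SU_le order_trans)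
  ultimately show ?thesis
    using \<open>C > 0\<close> by blast
qed

end
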